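(* Let $t\ge 2$ and $w\ge 1$ be integers, $u=\lfloor(\frac{t}{2}+1)^2\rfloor$, and let $(\mathcal{X},\mathcal{B})$ be a $(w,v)$ set system. If $\mathcal{F}=\{\mathcal{F}_1,\dots,\mathcal{F}_m\}$ is a minimal forbidden configuration in $\mathcal{B}$ containing $s$ distinct blocks, where $2\le s\le u$ (i.e. $|U(\mathcal{F})|=s$), then $$\Big|\bigcup_{B\in U(\mathcal{F})}B\Big|=\Big|\bigcup_{1\le i\le m}\bigcup_{B\in\mathcal{F}_i}B\Big|\le\min\{(s-1)w,\ v\}.$$
   Context: A $(w,v)$ set system is a pair $(\mathcal{X},\mathcal{B})$ with $|\mathcal{X}|=v$ and $\mathcal{B}$ a family of $w$-element subsets (blocks) of $\mathcal{X}$. A configuration in $\mathcal{B}$ is a collection $\mathcal{F}=\{\mathcal{F}_1,\dots,\mathcal{F}_m\}$ with $\mathcal{F}_i\subseteq\mathcal{B}$, $|\mathcal{F}_i|\le t$, and $\bigcap_i\mathcal{F}_i=\emptyset$; it is minimal if $\bigcap_{j\ne i}\mathcal{F}_j\neq\emptyset$ for every $i$. $U(\mathcal{F})=\bigcup_i\mathcal{F}_i$. A (minimal) forbidden configuration in $\mathcal{B}$ is a (minimal) configuration with $\big|\bigcap_{i=1}^m\big(\bigcup_{B\in\mathcal{F}_i}B\big)\big|\ge w$. *)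

theory Defs
  imports Complex_Main
begin

definition set_system :: "nat \<Rightarrow> nat \<Rightarrow> 'a set \<Rightarrow> 'a set set \<Rightarrow> bool" where
  "set_system w v X B \<longleftrightarrow> finite X \<and> card X = v \<and> (\<forall>b\<in>B. b \<subseteq> X \<and> card b = w)"

definition configuration :: "nat \<Rightarrow> 'a set set \<Rightarrow> 'a set set set \<Rightarrow> bool" where
  "configuration t B \<F> \<longleftrightarrow> finite \<F> \<and> \<F> \<noteq> {} \<and>
     (\<forall>F\<in>\<F>. F \<subseteq> B \<and> card F \<le> t) \<and> \<Inter>\<F> = {}"

definition minimal_configuration :: "nat \<Rightarrow> 'a set set \<Rightarrow> 'a set set set \<Rightarrow> bool" where
  "minimal_configuration t B \<F> \<longleftrightarrow> configuration t B \<F> \<and>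
     (\<forall>F\<in>\<F>. \<Inter>(\<F> - {F}) \<noteq> {})"

definition U :: "'a set set set \<Rightarrow> 'a set set" where
  "U \<F> = \<Union>\<F>"

definition minimal_forbidden_configuration :: "nat \<Rightarrow> nat \<Rightarrow> 'a set set \<Rightarrow> 'a set set set \<Rightarrow> bool" where
  "minimal_forbidden_configuration t w B \<F> \<longleftrightarrow> minimal_configuration t B \<F> \<and>
     card (\<Inter>F\<in>\<F>. \<Union>F) \<ge> w"

end

theory Submission
  imports Defs
begin

text \<open>Count the incidences between the points of \<open>V = \<Union>U(\<F>)\<close> and the \<open>s\<close> blocks of \<open>U(\<F>)\<close>:
  there are exactly \<open>s w\<close> of them. Every point of \<open>V\<close> lies in some block, and every point of
  \<open>I = \<Inter>\<^sub>i \<Union>\<F>\<^sub>i\<close> lies in at least two: a block of \<open>\<F>\<^sub>1\<close> through it misses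
  some \<open>\<F>\<^sub>j\<close> because \<open>\<Inter>\<^sub>i \<F>\<^sub>i = \<emptyset>\<close>, and \<open>\<F>\<^sub>j\<close> has another block through it.
  Hence \<open>|V| + |I| \<le> s w\<close>, and \<open>|I| \<ge> w\<close> gives \<open>|V| \<le> (s - 1) w\<close>.\<close>

lemma sum_card_eq_sum_degree:
  assumes "finite \<C>" "\<And>c. c \<in> \<C> \<Longrightarrow> finite c"
  shows "(\<Sum>c\<in>\<C>. card c) = (\<Sum>x\<in>\<Union>\<C>. card {c\<in>\<C>. x \<in> c})"
proof -
  have fin: "finite (\<Union>\<C>)" using assms by blast
  have "(\<Sum>c\<in>\<C>. card c) = (\<Sum>c\<in>\<C>. \<Sum>x\<in>\<Union>\<C>. if x \<in> c then 1 else 0 :: nat)"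
  proof (rule sum.cong[OF refl])
    fix c assume "c \<in> \<C>"
    then have "\<Union>\<C> \<inter> c = c" by blast
    then show "card c = (\<Sum>x\<in>\<Union>\<C>. if x \<in> c then 1 else 0 :: nat)"
      using fin by (simp add: sum.If_cases)
  qed
  also have "\<dots> = (\<Sum>x\<in>\<Union>\<C>. \<Sum>c\<in>\<C>. if x \<in> c then 1 else 0 :: nat)"
    by (rule sum.swap)
  also have "\<dots> = (\<Sum>x\<in>\<Union>\<C>. card {c\<in>\<C>. x \<in> c})"
    using assms(1) by (simp add: sum.If_cases Int_def conj_commute)
  finally show ?thesis .
qed

lemma card_Union_add_card_le_sum_card:
  assumes "finite \<C>" "\<And>c. c \<in> \<C> \<Longrightarrow> finite c" "K \<subseteq> \<Union>\<C>"
    and "\<And>x. x \<in> K \<Longrightarrow> 2 \<le> card {c\<in>\<C>. x \<in> c}"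
  shows "card (\<Union>\<C>) + card K \<le> (\<Sum>c\<in>\<C>. card c)"
proof -
  have fin: "finite (\<Union>\<C>)" using assms(1,2) by blast
  have degree_pos: "1 \<le> card {c\<in>\<C>. x \<in> c}" if "x \<in> \<Union>\<C>" for x
    using that assms(1) by (auto simp: Suc_le_eq card_gt_0_iff)
  have "card (\<Union>\<C>) + card K = (\<Sum>x\<in>\<Union>\<C>. 1) + (\<Sum>x\<in>\<Union>\<C>. if x \<in> K then 1 else 0 :: nat)"
    using fin assms(3) by (simp add: sum.If_cases Int_absorb1)
  also have "\<dots> = (\<Sum>x\<in>\<Union>\<C>. 1 + (if x \<in> K then 1 else 0 :: nat))"
    by (rule sum.distrib[symmetric])
  also have "\<dots> \<le> (\<Sum>x\<in>\<Union>\<C>. card {c\<in>\<C>. x \<in> c})"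
    using degree_pos assms(4) by (intro sum_mono) fastforce
  also have "\<dots> = (\<Sum>c\<in>\<C>. card c)"
    using sum_card_eq_sum_degree[OF assms(1,2)] by simp
  finally show ?thesis .
qed

lemma common_point_in_two_blocks:
  assumes "\<F> \<noteq> {}" "\<Inter>\<F> = {}" "finite (U \<F>)" and "x \<in> (\<Inter>F\<in>\<F>. \<Union>F)"
  shows "2 \<le> card {c\<in>U \<F>. x \<in> c}"
proof -
  obtain F0 where F0: "F0 \<in> \<F>" using assms(1) by blast
  then obtain c0 where c0: "c0 \<in> F0" "x \<in> c0" using assms(4) by blast
  obtain F1 where F1: "F1 \<in> \<F>" "c0 \<notin> F1" using assms(2) c0(1) by blast
  then obtain c1 where c1: "c1 \<in> F1" "x \<in> c1" using assms(4) by blast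
  have "{c0, c1} \<subseteq> {c\<in>U \<F>. x \<in> c}" using F0 F1 c0 c1 unfolding U_def by blast
  then have "card {c0, c1} \<le> card {c\<in>U \<F>. x \<in> c}" using assms(3) by (intro card_mono) auto
  moreover have "c0 \<noteq> c1" using F1 c1 by blast
  ultimately show ?thesis by simp
qed

lemma configuration_card_Union_le:
  assumes "set_system w v X B" and conf: "configuration t B \<F>"
    and I: "w \<le> card (\<Inter>F\<in>\<F>. \<Union>F)"
  shows "card (\<Union>(U \<F>)) \<le> (card (U \<F>) - 1) * w"
proof -
  have \<F>: "\<F> \<noteq> {}" "\<Inter>\<F> = {}" and UB: "U \<F> \<subseteq> B"
    using conf unfolding configuration_def U_def by blast+
  have X: "finite X" and BX: "B \<subseteq> Pow X" and Bw: "\<And>c. c \<in> B \<Longrightarrow> card c = w"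
    using assms(1) unfolding set_system_def by blast+
  have blocks: "finite c" "card c = w" if "c \<in> U \<F>" for c
    using that UB BX X Bw by (auto intro: finite_subset)
  have fin: "finite (U \<F>)" using UB BX X by (simp add: finite_subset)
  have "(\<Inter>F\<in>\<F>. \<Union>F) \<subseteq> \<Union>(U \<F>)"
    using \<F>(1) unfolding U_def by blast
  then have "card (\<Union>(U \<F>)) + card (\<Inter>F\<in>\<F>. \<Union>F) \<le> (\<Sum>c\<in>U \<F>. card c)"
    using card_Union_add_card_le_sum_card[OF fin blocks(1)] common_point_in_two_blocks[OF \<F> fin]
    by blast
  also have "\<dots> = card (U \<F>) * w" using blocks by simp
  finally show ?thesis using I by (simp add: diff_mult_distrib)
qed

theorem lemma2:
  fixes t w v s :: nat and X :: "'a set" and B :: "'a set set" and \<F> :: "'a set set set"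
  assumes "t \<ge> 2" and "w \<ge> 1"
    and "set_system w v X B"
    and "minimal_forbidden_configuration t w B \<F>"
    and "card (U \<F>) = s"
    and "2 \<le> s" and "s \<le> nat \<lfloor>(real t / 2 + 1) ^ 2\<rfloor>"
  shows "card (\<Union>(U \<F>)) = card (\<Union>F\<in>\<F>. \<Union>F)
    \<and> card (\<Union>(U \<F>)) \<le> min ((s - 1) * w) v"
proof -
  have "\<Union>(U \<F>) \<subseteq> X"
    using assms(3,4) unfolding set_system_def minimal_forbidden_configuration_def
      minimal_configuration_def configuration_def U_def by blast
  then have "card (\<Union>(U \<F>)) \<le> v"
    using assms(3) unfolding set_system_def by (auto intro: card_mono)
  moreover have "card (\<Union>(U \<F>)) \<le> (s - 1) * w"
    using assms(4) unfolding assms(5)[symmetric] minimal_forbidden_configuration_def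
      minimal_configuration_def by (blast intro: configuration_card_Union_le[OF assms(3)])
  moreover have "\<Union>(U \<F>) = (\<Union>F\<in>\<F>. \<Union>F)" unfolding U_def by blast
  ultimately show ?thesis by simp
qed

end
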